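(* Let $\mathcal{C}:=\operatorname{conv}(\{\Sigma_e\}_{e\in\mathcal{E}})$ and let $\mathcal{P}$ be the set of all distributions $P$ on $\mathbb{R}^{1\times p}$ with $\mathbb{E}_P[\mathbf{x}]=0$ and finite second moments such that $\mathbb{E}_P[\mathbf{x}^\top\mathbf{x}]\in\mathcal{C}$. Let $\mathcal{L}$ be one of $\mathcal{L}_{\mathrm{RCS}}$, $-\mathcal{L}_{\mathrm{var}}$, $\mathcal{L}_{\mathrm{reg}}$, and let $V_k^*\in\mathcal{O}_{p\times k}$ be a solution of the corresponding problem (maxRCS, minPCA, maxRegret respectively), i.e. $V_k^*\in\arg\min_{V\in\mathcal{O}_{p\times k}}\max_{e\in\mathcal{E}}\mathcal{L}(V;P_e)$. Then: (i) for all $V\in\mathcal{O}_{p\times k}$, $\sup_{P\in\mathcal{P}}\mathcal{L}(V;P)=\max_{e\in\mathcal{E}}\mathcal{L}(V;P_e)$; (ii) for all $V,W\in\mathcal{O}_{p\times k}$, if $\max_e\mathcal{L}(V;P_e)<\max_e\mathcal{L}(W;P_e)$ then $\sup_{P\in\mathcal{P}}\mathcal{L}(V;P)<\sup_{P\in\mathcal{P}}\mathcal{L}(W;P)$; (iii) $V_k^*\in\arg\min_{V\in\mathcal{O}_{p\times k}}\sup_{P\in\mathcal{P}}\mathcal{L}(V;P)$; (iv) the conclusion of (iii) does not hold in general for pooled PCA and separate PCA: there exist $p,k,E$, weights $(w_e)$ and source distributions such that the (unique up to sign) solution $V^{\mathrm{pool}}$ of poolPCA and the solution $V^{\mathrm{sep}}$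 of sepPCA are not in $\arg\min_{V}\sup_{P\in\mathcal{P}}\mathcal{L}(V;P)$.
   Context: Let $p\ge 1$ and $1\le k\le p$ be integers and $\mathcal{O}_{p\times k}:=\{V\in\mathbb{R}^{p\times k}: V^\top V=I_k\}$. Source domains are $\mathcal{E}=\{1,\dots,E\}$; for each $e\in\mathcal{E}$, $P_e$ is a distribution on row vectors $\mathbf{x}\in\mathbb{R}^{1\times p}$ with $\mathbb{E}[\mathbf{x}]=0$ and finite covariance $\Sigma_e:=\mathbb{E}[\mathbf{x}^\top\mathbf{x}]$ with $\operatorname{Tr}(\Sigma_e)>0$; weights $w_e>0$ with $\sum_e w_e=1$. For symmetric positive semidefinite $\Sigma$ and $V\in\mathcal{O}_{p\times k}$: $\mathcal{L}_{\mathrm{var}}(V;\Sigma)=\operatorname{Tr}(V^\top\Sigma V)$, $\mathcal{L}_{\mathrm{RCS}}(V;\Sigma)=\operatorname{Tr}(\Sigma)-\operatorname{Tr}(V^\top\Sigma V)$ ($=\mathbb{E}\|\mathbf{x}-\mathbf{x}VV^\top\|_2^2$), $\mathcal{L}_{\mathrm{reg}}(V;\Sigma)=\mathcal{L}_{\mathrm{RCS}}(V;\Sigma)-\min_{W\in\mathcal{O}_{p\times k}}\mathcal{L}_{\mathrm{RCS}}(W;\Sigma)$; for a distribution $P$ with covariance $\Sigma=\mathbb{E}_P[\mathbf{x}^\top\mathbf{x}]$, $\mathcal{L}(V;P):=\mathcal{L}(V;\Sigma)$. poolPCA: $V^{\mathrm{pool}}\in\arg\max_{V\in\mathcal{O}_{p\times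 k}}\operatorname{Tr}(V^\top\Sigma_{\mathrm{pool}}V)$ with $\Sigma_{\mathrm{pool}}=\sum_e w_e\Sigma_e$. sepPCA: for each $e$ let $V^{*,e}\in\arg\max_V\operatorname{Tr}(V^\top\Sigma_eV)$, let $e_0$ be the smallest index minimizing $\operatorname{Tr}((V^{*,e})^\top\Sigma_eV^{*,e})$, and $V^{\mathrm{sep}}:=V^{*,e_0}$. *)

theory Defs
  imports "HOL-Probability.Probability"
begin

text \<open>Row vectors x in R^{1 x p} are modelled as real^'p; p x k matrices as real^'k^'p
  (rows indexed by 'p, columns by 'k).\<close>

definition stiefel :: "(real^'k^'p) set" where
  "stiefel = {V. transpose V ** V = mat 1}"

definition L_var :: "real^'k^'p \<Rightarrow> real^'p^'p \<Rightarrow> real" where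
  "L_var V S = trace (transpose V ** S ** V)"

definition L_RCS :: "real^'k^'p \<Rightarrow> real^'p^'p \<Rightarrow> real" where
  "L_RCS V S = trace S - trace (transpose V ** S ** V)"

definition L_reg :: "real^'k^'p \<Rightarrow> real^'p^'p \<Rightarrow> real" where
  "L_reg V S = L_RCS V S - (INF W\<in>(stiefel :: (real^'k^'p) set). L_RCS W S)"

datatype loss_kind = RCS | NegVar | Reg

fun loss :: "loss_kind \<Rightarrow> real^'k^'p \<Rightarrow> real^'p^'p \<Rightarrow> real" where
  "loss RCS V S = L_RCS V S"
| "loss NegVar V S = - L_var V S"
| "loss Reg V S = L_reg V S"

definition centered_dist :: "(real^'p) measure \<Rightarrow> bool" where
  "centered_dist M \<longleftrightarrow> prob_space M \<and> sets M = sets borel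
     \<and> (\<forall>i. integrable M (\<lambda>x. (x$i)^2))
     \<and> (\<forall>i. (\<integral>x. x$i \<partial>M) = 0)"

definition covmat :: "(real^'p) measure \<Rightarrow> real^'p^'p" where
  "covmat M = (\<chi> i j. \<integral>x. x$i * x$j \<partial>M)"

definition lossP :: "loss_kind \<Rightarrow> real^'k^'p \<Rightarrow> (real^'p) measure \<Rightarrow> real" where
  "lossP L V M = loss L V (covmat M)"

definition Pset :: "(nat \<Rightarrow> (real^'p) measure) \<Rightarrow> nat \<Rightarrow> (real^'p) measure set" where
  "Pset Ps E = {M. centered_dist M \<and> covmat M \<in> convex hull ((\<lambda>e. covmat (Ps e)) ` {1..E})}"

definition worst_src :: "loss_kind \<Rightarrow> real^'k^'p \<Rightarrow> (nat \<Rightarrow> (real^'p) measure) \<Rightarrow> nat \<Rightarrow> real" where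
  "worst_src L V Ps E = Max ((\<lambda>e. lossP L V (Ps e)) ` {1..E})"

definition sup_risk :: "loss_kind \<Rightarrow> real^'k^'p \<Rightarrow> (nat \<Rightarrow> (real^'p) measure) \<Rightarrow> nat \<Rightarrow> real" where
  "sup_risk L V Ps E = Sup ((\<lambda>M. lossP L V M) ` Pset Ps E)"

definition valid_sources :: "(nat \<Rightarrow> (real^'p) measure) \<Rightarrow> (nat \<Rightarrow> real) \<Rightarrow> nat \<Rightarrow> bool" where
  "valid_sources Ps w E \<longleftrightarrow> E \<ge> 1
     \<and> (\<forall>e\<in>{1..E}. centered_dist (Ps e) \<and> trace (covmat (Ps e)) > 0 \<and> w e > 0)
     \<and> (\<Sum>e=1..E. w e) = 1"

definition pca_sol :: "real^'p^'p \<Rightarrow> real^'k^'p \<Rightarrow> bool" where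
  "pca_sol S V \<longleftrightarrow> V \<in> stiefel \<and> (\<forall>W\<in>(stiefel :: (real^'k^'p) set). L_var W S \<le> L_var V S)"

definition pool_cov :: "(nat \<Rightarrow> (real^'p) measure) \<Rightarrow> (nat \<Rightarrow> real) \<Rightarrow> nat \<Rightarrow> real^'p^'p" where
  "pool_cov Ps w E = (\<Sum>e=1..E. w e *\<^sub>R covmat (Ps e))"

definition sep_index :: "(nat \<Rightarrow> (real^'p) measure) \<Rightarrow> nat \<Rightarrow> (nat \<Rightarrow> real^'k^'p) \<Rightarrow> nat" where
  "sep_index Ps E Vs = (LEAST e. e \<in> {1..E} \<and>
      (\<forall>e'\<in>{1..E}. L_var (Vs e) (covmat (Ps e)) \<le> L_var (Vs e') (covmat (Ps e'))))"

definition is_argmin_sup :: "loss_kind \<Rightarrow> real^'k^'p \<Rightarrow> (nat \<Rightarrow> (real^'p) measure) \<Rightarrow> nat \<Rightarrow> bool" where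
  "is_argmin_sup L V Ps E \<longleftrightarrow> V \<in> stiefel \<and> (\<forall>W\<in>(stiefel :: (real^'k^'p) set). sup_risk L V Ps E \<le> sup_risk L W Ps E)"

end

theory Submission
  imports Defs
begin

text \<open>For each of the three losses, \<open>loss L V\<close> is a convex function of the covariance
  matrix: \<open>L_RCS V\<close> and \<open>- L_var V\<close> are linear, and the regret subtracts from \<open>L_RCS V\<close>
  the pointwise infimum of the linear maps \<open>L_RCS W\<close>, which is concave. A convex function
  on the convex hull of the finitely many source covariances is maximised at one of them,
  and the sources themselves belong to the uncertainty set; so the robust risk equals the
  worst-source risk, which gives (i)--(iii).

  For (iv) take two sources in \<open>\<real>\<^sup>2\<close> with covariances diag(4,0) and diag(0,1) and equal
  weights. Pooled PCA picks \<open>\<plusminus>e\<^sub>1\<close>, separate PCA picks \<open>\<plusminus>e\<^sub>2\<close> (the source with less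
  explained variance), but the direction (12,5)/13 has strictly smaller worst-source loss
  than every axis-aligned direction.\<close>

lemma trace_scaleR: "trace (c *\<^sub>R (A::real^'n^'n)) = c * trace A"
  by (simp add: trace_def sum_distrib_left)

lemma linear_trace: "linear (trace :: real^'n^'n \<Rightarrow> real)"
  by (rule linearI) (simp_all add: trace_add trace_scaleR)

lemma matrix_add_rdistrib: "((A + B) ** C) = (A ** C) + (B ** C)"
  by (vector matrix_matrix_mult_def sum.distrib[symmetric] field_simps)

lemma linear_L_var: "linear (L_var V)"
  unfolding L_var_def
  by (rule linearI)
     (simp_all add: matrix_add_ldistrib matrix_add_rdistrib trace_add trace_scaleR
       matrix_scalar_ac flip: scalar_matrix_assoc)

lemma linear_L_RCS: "linear (L_RCS V)"
  using linear_compose_sub[OF linear_trace linear_L_var[of V]]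
  unfolding L_RCS_def L_var_def by simp

lemma convex_on_linear:
  fixes f :: "'a::real_vector \<Rightarrow> real"
  assumes "linear f" "convex S"
  shows "convex_on S f"
  using assms by (simp add: convex_on_def linear_add linear_scale)

lemma concave_on_INF:
  fixes f :: "'i \<Rightarrow> 'a::real_vector \<Rightarrow> real"
  assumes S: "convex S"
    and conc: "\<And>i. i \<in> I \<Longrightarrow> concave_on S (f i)"
    and bdd: "\<And>x. x \<in> S \<Longrightarrow> bdd_below ((\<lambda>i. f i x) ` I)"
  shows "concave_on S (\<lambda>x. INF i\<in>I. f i x)"
proof (cases "I = {}")
  case True
  then show ?thesis using S by (simp add: concave_on_const)
next
  case False
  show ?thesis
    unfolding concave_on_iff
  proof (intro conjI S ballI allI impI)
    fix x y and u v :: real assume xy: "x \<in> S" "y \<in> S" and uv: "0 \<le> u" "0 \<le> v" "u + v = 1"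
    show "u * (INF i\<in>I. f i x) + v * (INF i\<in>I. f i y) \<le> (INF i\<in>I. f i (u *\<^sub>R x + v *\<^sub>R y))"
    proof (rule cINF_greatest[OF False])
      fix i assume i: "i \<in> I"
      have "u * (INF i\<in>I. f i x) + v * (INF i\<in>I. f i y) \<le> u * f i x + v * f i y"
        using uv by (intro add_mono mult_left_mono cINF_lower bdd xy i) auto
      also have "\<dots> \<le> f i (u *\<^sub>R x + v *\<^sub>R y)"
        using conc[OF i] xy uv by (simp add: concave_on_iff)
      finally show "u * (INF i\<in>I. f i x) + v * (INF i\<in>I. f i y) \<le> f i (u *\<^sub>R x + v *\<^sub>R y)" .
    qed
  qed
qed

lemma L_var_eq_sum:
  "L_var W S = (\<Sum>j\<in>UNIV. \<Sum>b\<in>UNIV. \<Sum>a\<in>UNIV. W$a$j * S$a$b * W$b$j)"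
  unfolding L_var_def trace_def matrix_matrix_mult_def transpose_def
  by (simp add: sum_distrib_right)

lemma stiefel_abs_entry_le_1:
  assumes "W \<in> stiefel"
  shows "\<bar>W$a$j\<bar> \<le> 1"
proof -
  have "(transpose W ** W)$j$j = 1"
    using assms by (simp add: stiefel_def mat_def)
  then have "(\<Sum>i\<in>UNIV. W$i$j * W$i$j) = 1"
    by (simp add: matrix_matrix_mult_def transpose_def)
  moreover have "W$a$j * W$a$j \<le> (\<Sum>i\<in>UNIV. W$i$j * W$i$j)"
    by (rule member_le_sum) auto
  ultimately show ?thesis
    by (simp flip: abs_square_le_1 add: power2_eq_square)
qed

lemma abs_L_var_le_stiefel:
  fixes W :: "real^'k^'p"
  assumes "W \<in> stiefel"
  shows "\<bar>L_var W S\<bar> \<le> (\<Sum>j\<in>(UNIV::'k set). \<Sum>b\<in>UNIV. \<Sum>a\<in>UNIV. \<bar>S$a$b\<bar>)"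
proof -
  have entry: "\<bar>W$a$j * S$a$b * W$b$j\<bar> \<le> \<bar>S$a$b\<bar>" for a b j
  proof -
    have "\<bar>W$a$j * S$a$b * W$b$j\<bar> = \<bar>S$a$b\<bar> * (\<bar>W$a$j\<bar> * \<bar>W$b$j\<bar>)"
      by (simp add: abs_mult)
    also have "\<dots> \<le> \<bar>S$a$b\<bar>"
      using stiefel_abs_entry_le_1[OF assms] by (simp add: mult_le_one mult_left_le)
    finally show ?thesis .
  qed
  show ?thesis
    unfolding L_var_eq_sum
    by (rule order_trans[OF sum_abs] sum_mono)+ (rule order_trans[OF sum_abs] sum_mono entry)+
qed

lemma bdd_below_L_RCS_stiefel:
  "bdd_below ((\<lambda>W. L_RCS W S) ` (stiefel :: (real^'k^'p) set))"
proof (rule bdd_belowI2)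
  fix W :: "real^'k^'p" assume "W \<in> stiefel"
  from abs_L_var_le_stiefel[OF this, of S]
  show "trace S - (\<Sum>j\<in>(UNIV::'k set). \<Sum>b\<in>UNIV. \<Sum>a\<in>UNIV. \<bar>S$a$b\<bar>) \<le> L_RCS W S"
    unfolding L_RCS_def L_var_def by linarith
qed

lemma convex_on_loss:
  fixes V :: "real^'k^'p"
  shows "convex_on UNIV (loss L V)"
proof (cases L)
  case RCS
  then have "loss L V = L_RCS V" by (simp add: fun_eq_iff)
  then show ?thesis by (simp add: convex_on_linear linear_L_RCS)
next
  case NegVar
  then have "loss L V = (\<lambda>S. - L_var V S)" by (simp add: fun_eq_iff)
  then show ?thesis by (simp add: convex_on_linear linear_compose_neg linear_L_var)
next
  case Reg
  have "concave_on UNIV (L_RCS W)" for W :: "real^'k^'p"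
    using linear_L_RCS[of W] by (simp add: concave_on_iff linear_add linear_scale)
  then have "concave_on UNIV (\<lambda>S. INF W\<in>(stiefel :: (real^'k^'p) set). L_RCS W S)"
    by (intro concave_on_INF bdd_below_L_RCS_stiefel) auto
  moreover have "loss L V = (\<lambda>S. L_RCS V S - (INF W\<in>(stiefel :: (real^'k^'p) set). L_RCS W S))"
    using Reg by (simp add: fun_eq_iff L_reg_def)
  ultimately show ?thesis
    by (simp add: convex_on_diff convex_on_linear linear_L_RCS)
qed

lemma sup_risk_eq_worst_src:
  assumes "E \<ge> 1" and sources: "\<forall>e\<in>{1..E}. centered_dist (Ps e)"
  shows "sup_risk L V Ps E = worst_src L V Ps E"
proof -
  let ?C = "(\<lambda>e. covmat (Ps e)) ` {1..E}"
  have "worst_src L V Ps E \<in> (\<lambda>e. lossP L V (Ps e)) ` {1..E}"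
    unfolding worst_src_def using \<open>E \<ge> 1\<close> by (intro Max_in) auto
  then obtain e where e: "e \<in> {1..E}" and worst: "worst_src L V Ps E = lossP L V (Ps e)"
    by blast
  have "Ps e \<in> Pset Ps E"
    using e sources by (auto simp: Pset_def intro: hull_inc)
  moreover have "lossP L V M \<le> worst_src L V Ps E" if "M \<in> Pset Ps E" for M
  proof -
    have "\<forall>S\<in>?C. loss L V S \<le> worst_src L V Ps E"
      by (auto simp: worst_src_def lossP_def)
    then have "\<forall>S\<in>convex hull ?C. loss L V S \<le> worst_src L V Ps E"
      by (intro convex_on_convex_hull_bound convex_on_subset[OF convex_on_loss]) auto
    with that show ?thesis
      by (simp add: Pset_def lossP_def)
  qed
  ultimately show ?thesis
    unfolding sup_risk_def worst by (intro cSup_eq_maximum) auto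
qed

definition symmetric_two_point :: "real^'p \<Rightarrow> (real^'p) measure" where
  "symmetric_two_point v =
     distr (measure_pmf (bernoulli_pmf (1/2))) borel (\<lambda>b. if b then v else - v)"

lemma
  fixes v :: "real^'p" and f :: "real^'p \<Rightarrow> real"
  assumes "f \<in> borel_measurable borel"
  shows integral_symmetric_two_point: "(\<integral>x. f x \<partial>symmetric_two_point v) = (f v + f (- v)) / 2"
    and integrable_symmetric_two_point: "integrable (symmetric_two_point v) f"
proof -
  have m: "(\<lambda>b. if b then v else - v) \<in> measurable (measure_pmf (bernoulli_pmf (1/2))) borel"
    by simp
  show "(\<integral>x. f x \<partial>symmetric_two_point v) = (f v + f (- v)) / 2"
    unfolding symmetric_two_point_def integral_distr[OF m assms] by simp
  show "integrable (symmetric_two_point v) f"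
    unfolding symmetric_two_point_def integrable_distr_eq[OF m assms]
    by (intro integrable_measure_pmf_finite) simp
qed

lemma centered_dist_symmetric_two_point: "centered_dist (symmetric_two_point v)"
  unfolding centered_dist_def
proof (intro conjI allI)
  show "prob_space (symmetric_two_point v)"
    unfolding symmetric_two_point_def
    by (intro prob_space.prob_space_distr) (simp_all add: prob_space_measure_pmf)
  show "sets (symmetric_two_point v) = sets borel"
    by (simp add: symmetric_two_point_def)
  show "integrable (symmetric_two_point v) (\<lambda>x. (x$i)^2)" for i
    by (intro integrable_symmetric_two_point) measurable
  show "(\<integral>x. x$i \<partial>symmetric_two_point v) = 0" for i
    by (subst integral_symmetric_two_point) auto
qed

lemma covmat_symmetric_two_point: "covmat (symmetric_two_point v) = (\<chi> i j. v$i * v$j)"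
  unfolding covmat_def by (subst integral_symmetric_two_point) auto

lemma L_var_outer_product:
  "L_var V (\<chi> i j. v$i * v$j) = (\<Sum>j\<in>UNIV. (\<Sum>i\<in>UNIV. v$i * V$i$j)^2)"
proof -
  have "(\<Sum>i\<in>UNIV. v$i * V$i$j)^2 = (\<Sum>b\<in>UNIV. \<Sum>a\<in>UNIV. V$a$j * (\<chi> i j. v$i * v$j)$a$b * V$b$j)"
    for j
    unfolding power2_eq_square sum_product
    by (subst sum.swap) (simp add: mult_ac)
  then show ?thesis
    unfolding L_var_eq_sum by simp
qed

lemma trace_outer_product: "trace (\<chi> i j. v$i * v$j) = (\<Sum>i\<in>UNIV. (v$i)^2)"
  by (simp add: trace_def power2_eq_square)

lemma stiefel_2_1_iff: "(V::real^1^2) \<in> stiefel \<longleftrightarrow> (V$1$1)^2 + (V$2$1)^2 = 1"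
proof -
  have "transpose V ** V = mat 1 \<longleftrightarrow> (transpose V ** V)$1$1 = 1"
    by (simp add: vec_eq_iff forall_1 mat_def)
  then show ?thesis
    by (simp add: stiefel_def matrix_matrix_mult_def transpose_def sum_2 power2_eq_square)
qed

definition unit_column :: "2 \<Rightarrow> real^1^2" where
  "unit_column i = (\<chi> r c. if r = i then 1 else 0)"

lemma unit_column_in_stiefel: "unit_column i \<in> stiefel"
  using exhaust_2[of i] by (auto simp: stiefel_2_1_iff unit_column_def)

text \<open>The simp rule \<open>One_nat_def\<close> would rewrite \<open>example_sources 1\<close> to
  \<open>example_sources (Suc 0)\<close>, so it is removed from the simp set in proofs about the example.\<close>

definition example_sources :: "nat \<Rightarrow> (real^2) measure" where
  "example_sources e = symmetric_two_point (if e = 1 then vector [2, 0] else vector [0, 1])"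

lemma L_var_trace_example_sources:
  fixes V :: "real^1^2"
  shows "L_var V (covmat (example_sources 1)) = 4 * (V$1$1)^2"
    and "L_var V (covmat (example_sources 2)) = (V$2$1)^2"
    and "trace (covmat (example_sources 1)) = 4"
    and "trace (covmat (example_sources 2)) = 1"
  by (simp_all add: example_sources_def covmat_symmetric_two_point L_var_outer_product
      trace_outer_product sum_1 sum_2 power_mult_distrib)

lemma centered_dist_example_sources: "centered_dist (example_sources e)"
  by (simp add: example_sources_def centered_dist_symmetric_two_point)

lemma valid_example_sources: "valid_sources example_sources (\<lambda>_. 1/2) 2"
proof -
  note centered_dist_example_sources
  moreover have "{1..2::nat} = {1, 2}" by auto
  ultimately show ?thesis
    unfolding valid_sources_def by (simp add: L_var_trace_example_sources del: One_nat_def)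
qed

lemma stiefel_2_1_entry_sq_le_1: "(W::real^1^2) \<in> stiefel \<Longrightarrow> (W$i$1)^2 \<le> 1"
  using exhaust_2[of i] unfolding stiefel_2_1_iff
  by (metis le_add_same_cancel1 le_add_same_cancel2 zero_le_power2)

lemma INF_stiefel_2_1_one_minus_entry_sq:
  assumes "c \<ge> 0"
  shows "(INF W\<in>(stiefel :: (real^1^2) set). c * (1 - (W$i$1)^2)) = 0"
proof (rule cInf_eq_minimum)
  show "0 \<in> (\<lambda>W. c * (1 - (W$i$1)^2)) ` (stiefel :: (real^1^2) set)"
    by (rule image_eqI[OF _ unit_column_in_stiefel[of i]]) (simp add: unit_column_def)
  fix x assume "x \<in> (\<lambda>W. c * (1 - (W$i$1)^2)) ` (stiefel :: (real^1^2) set)"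
  then show "0 \<le> x"
    using assms stiefel_2_1_entry_sq_le_1 by auto
qed

lemma L_RCS_example_sources:
  fixes W :: "real^1^2"
  shows "L_RCS W (covmat (example_sources 1)) = 4 * (1 - (W$1$1)^2)"
    and "L_RCS W (covmat (example_sources 2)) = 1 - (W$2$1)^2"
  by (simp_all add: L_RCS_def L_var_trace_example_sources[unfolded L_var_def] del: One_nat_def)

lemma lossP_example_sources:
  fixes V :: "real^1^2"
  shows "lossP L V (example_sources 1) = (if L = NegVar then 0 else 4) - 4 * (V$1$1)^2"
    and "lossP L V (example_sources 2) = (if L = NegVar then 0 else 1) - (V$2$1)^2"
proof -
  have "(INF W\<in>(stiefel :: (real^1^2) set). L_RCS W (covmat (example_sources 1))) = 0"
    unfolding L_RCS_example_sources by (rule INF_stiefel_2_1_one_minus_entry_sq) simp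
  moreover have "(INF W\<in>(stiefel :: (real^1^2) set). L_RCS W (covmat (example_sources 2))) = 0"
    using INF_stiefel_2_1_one_minus_entry_sq[of 1 2] by (simp add: L_RCS_example_sources)
  ultimately show "lossP L V (example_sources 1) = (if L = NegVar then 0 else 4) - 4 * (V$1$1)^2"
    and "lossP L V (example_sources 2) = (if L = NegVar then 0 else 1) - (V$2$1)^2"
    by (cases L; simp only: lossP_def loss.simps L_reg_def L_RCS_example_sources
        L_var_trace_example_sources; simp)+
qed

lemma worst_src_example_sources:
  "worst_src L V example_sources 2 =
     max (lossP L V (example_sources 1)) (lossP L V (example_sources 2))"
proof -
  have "{1..2::nat} = {1, 2}" by auto
  then show ?thesis
    unfolding worst_src_def by (simp del: One_nat_def)
qed

lemma axis_aligned_not_is_argmin_sup_example: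
  fixes V :: "real^1^2"
  assumes V: "V \<in> stiefel" and axis: "V$1$1 = 0 \<or> V$2$1 = 0"
  shows "\<not> is_argmin_sup L V example_sources 2"
proof
  define W :: "real^1^2" where "W = (\<chi> i j. if i = 1 then 12/13 else 5/13)"
  have W: "W \<in> stiefel"
    by (simp add: stiefel_2_1_iff W_def power2_eq_square)
  assume "is_argmin_sup L V example_sources 2"
  then have "sup_risk L V example_sources 2 \<le> sup_risk L W example_sources 2"
    unfolding is_argmin_sup_def using W by blast
  then have "worst_src L V example_sources 2 \<le> worst_src L W example_sources 2"
    by (simp add: sup_risk_eq_worst_src centered_dist_example_sources)
  moreover have "worst_src L W example_sources 2 = (if L = NegVar then - 25/169 else 144/169)"
    by (simp add: worst_src_example_sources lossP_example_sources W_def power2_eq_square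
        del: One_nat_def)
  moreover have "worst_src L V example_sources 2 \<ge> (if L = NegVar then 0 else 1)"
  proof -
    have "(V$1$1)^2 = 1 \<and> V$2$1 = 0 \<or> V$1$1 = 0 \<and> (V$2$1)^2 = 1"
      using V axis by (auto simp: stiefel_2_1_iff)
    then show ?thesis
      by (auto simp: worst_src_example_sources lossP_example_sources simp del: One_nat_def)
  qed
  ultimately show False
    by (simp split: if_splits)
qed

lemma L_var_example_pool:
  fixes V :: "real^1^2"
  shows "L_var V (pool_cov example_sources (\<lambda>_. 1/2) 2) = 2 * (V$1$1)^2 + (V$2$1)^2 / 2"
proof -
  have "{1..2::nat} = {1, 2}" by auto
  then show ?thesis
    unfolding pool_cov_def linear_sum[OF linear_L_var] linear_scale[OF linear_L_var]
    by (simp add: L_var_trace_example_sources del: One_nat_def)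
qed

lemma pca_sol_example_pool_iff:
  "pca_sol (pool_cov example_sources (\<lambda>_. 1/2) 2) V \<longleftrightarrow> V = unit_column 1 \<or> V = - unit_column 1"
proof
  assume sol: "pca_sol (pool_cov example_sources (\<lambda>_. 1/2) 2) V"
  then have "(V$1$1)^2 + (V$2$1)^2 = 1"
    by (simp add: pca_sol_def stiefel_2_1_iff)
  moreover have "2 \<le> 2 * (V$1$1)^2 + (V$2$1)^2 / 2"
    using sol unit_column_in_stiefel[of 1]
    unfolding pca_sol_def L_var_example_pool by (force simp: unit_column_def)
  ultimately have "(V$2$1)^2 = 0" and "(V$1$1)^2 = 1"
    using zero_le_power2[of "V$2$1"] by linarith+
  then have "V$2$1 = 0" and "V$1$1 = 1 \<or> V$1$1 = -1"
    by (simp_all add: power2_eq_1_iff)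
  then show "V = unit_column 1 \<or> V = - unit_column 1"
    by (auto simp: vec_eq_iff forall_2 forall_1 unit_column_def)
next
  assume "V = unit_column 1 \<or> V = - unit_column 1"
  then have "V \<in> stiefel" and "L_var V (pool_cov example_sources (\<lambda>_. 1/2) 2) = 2"
    by (auto simp: stiefel_2_1_iff L_var_example_pool unit_column_def)
  moreover have "L_var W (pool_cov example_sources (\<lambda>_. 1/2) 2) \<le> 2"
    if "W \<in> stiefel" for W :: "real^1^2"
    using that zero_le_power2[of "W$2$1"] unfolding L_var_example_pool stiefel_2_1_iff by linarith
  ultimately show "pca_sol (pool_cov example_sources (\<lambda>_. 1/2) 2) V"
    by (simp add: pca_sol_def)
qed

lemma pca_sol_example_sources:
  fixes V :: "real^1^2"
  shows "pca_sol (covmat (example_sources 1)) V \<Longrightarrow> L_var V (covmat (example_sources 1)) = 4"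
    and "pca_sol (covmat (example_sources 2)) V \<Longrightarrow> L_var V (covmat (example_sources 2)) = 1 \<and> V$1$1 = 0"
proof -
  assume sol: "pca_sol (covmat (example_sources 1)) V"
  then have "(V$1$1)^2 \<le> 1" and "4 * (unit_column 1 $ 1 $ 1)^2 \<le> 4 * (V$1$1)^2"
    using unit_column_in_stiefel[of 1] stiefel_2_1_entry_sq_le_1
    by (auto simp: pca_sol_def L_var_trace_example_sources simp del: One_nat_def)
  then show "L_var V (covmat (example_sources 1)) = 4"
    by (simp add: L_var_trace_example_sources unit_column_def del: One_nat_def)
next
  assume sol: "pca_sol (covmat (example_sources 2)) V"
  then have "(V$1$1)^2 + (V$2$1)^2 = 1" and "(unit_column 2 $ 2 $ 1)^2 \<le> (V$2$1)^2"
    using unit_column_in_stiefel[of 2]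
    by (auto simp: pca_sol_def stiefel_2_1_iff L_var_trace_example_sources)
  moreover have "(unit_column 2 $ 2 $ 1)^2 = 1"
    by (simp add: unit_column_def)
  ultimately have "(V$2$1)^2 = 1" and "(V$1$1)^2 = 0"
    using zero_le_power2[of "V$1$1"] by linarith+
  then show "L_var V (covmat (example_sources 2)) = 1 \<and> V$1$1 = 0"
    by (simp add: L_var_trace_example_sources)
qed

lemma sep_index_example_sources:
  assumes "\<forall>e\<in>{1..2}. pca_sol (covmat (example_sources e)) (Vs e :: real^1^2)"
  shows "sep_index example_sources 2 Vs = 2"
proof -
  have "L_var (Vs 1) (covmat (example_sources 1)) = 4"
    and "L_var (Vs 2) (covmat (example_sources 2)) = 1"
    using assms pca_sol_example_sources by (auto simp del: One_nat_def)
  moreover have "{1..2::nat} = {1, 2}" by auto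
  ultimately show ?thesis
    unfolding sep_index_def
    by (intro Least_equality) (auto simp del: One_nat_def)
qed

lemma pool_pca_not_is_argmin_sup_example:
  fixes V :: "real^1^2"
  assumes "pca_sol (pool_cov example_sources (\<lambda>_. 1/2) 2) V"
  shows "\<not> is_argmin_sup L V example_sources 2"
proof -
  have "V = unit_column 1 \<or> V = - unit_column 1"
    using assms by (simp add: pca_sol_example_pool_iff)
  then have "V \<in> stiefel" and "V$2$1 = 0"
    by (auto simp: stiefel_2_1_iff unit_column_def)
  then show ?thesis
    by (intro axis_aligned_not_is_argmin_sup_example) simp_all
qed

lemma sep_pca_not_is_argmin_sup_example:
  assumes "\<forall>e\<in>{1..2}. pca_sol (covmat (example_sources e)) (Vs e :: real^1^2)"
  shows "\<not> is_argmin_sup L (Vs (sep_index example_sources 2 Vs)) example_sources 2"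
proof -
  have "pca_sol (covmat (example_sources 2)) (Vs 2)"
    using assms by simp
  then have "Vs 2 \<in> stiefel" and "Vs 2 $ 1 $ 1 = 0"
    using pca_sol_example_sources(2) by (simp_all add: pca_sol_def)
  then show ?thesis
    unfolding sep_index_example_sources[OF assms]
    by (intro axis_aligned_not_is_argmin_sup_example) simp_all
qed

theorem mainTheorem2:
  fixes L :: loss_kind
    and E :: nat and w :: "nat \<Rightarrow> real"
    and Ps :: "nat \<Rightarrow> (real^'p) measure"
    and Vstar :: "real^'k^'p"
  assumes kp: "CARD('k) \<le> CARD('p)"
    and src: "valid_sources Ps w E"
    and Vstar_O: "Vstar \<in> stiefel"
    and Vstar_opt: "\<forall>V\<in>(stiefel :: (real^'k^'p) set). worst_src L Vstar Ps E \<le> worst_src L V Ps E"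
  shows
    "(\<forall>V\<in>(stiefel :: (real^'k^'p) set). sup_risk L V Ps E = worst_src L V Ps E)
   \<and> (\<forall>V\<in>(stiefel :: (real^'k^'p) set). \<forall>W\<in>(stiefel :: (real^'k^'p) set).
        worst_src L V Ps E < worst_src L W Ps E \<longrightarrow> sup_risk L V Ps E < sup_risk L W Ps E)
   \<and> is_argmin_sup L Vstar Ps E
   \<and> (\<exists>(E'::nat) (w'::nat \<Rightarrow> real) (Ps'::nat \<Rightarrow> (real^2) measure).
        valid_sources Ps' w' E'
      \<and> (\<exists>V0::real^1^2. {V. pca_sol (pool_cov Ps' w' E') V} = {V0, - V0})
      \<and> (\<forall>Vp::real^1^2. pca_sol (pool_cov Ps' w' E') Vp \<longrightarrow> \<not> is_argmin_sup L Vp Ps' E')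
      \<and> (\<forall>Vs::nat \<Rightarrow> real^1^2. (\<forall>e\<in>{1..E'}. pca_sol (covmat (Ps' e)) (Vs e)) \<longrightarrow>
           \<not> is_argmin_sup L (Vs (sep_index Ps' E' Vs)) Ps' E'))"
proof -
  have robust: "sup_risk L V Ps E = worst_src L V Ps E" for V :: "real^'k^'p"
    using src by (intro sup_risk_eq_worst_src) (simp_all add: valid_sources_def)
  have "is_argmin_sup L Vstar Ps E"
    using Vstar_O Vstar_opt by (simp add: is_argmin_sup_def robust)
  moreover have "\<exists>V0::real^1^2. {V. pca_sol (pool_cov example_sources (\<lambda>_. 1/2) 2) V} = {V0, - V0}"
    by (intro exI[of _ "unit_column 1"]) (auto simp: pca_sol_example_pool_iff)
  ultimately show ?thesis
    using valid_example_sources pool_pca_not_is_argmin_sup_example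
      sep_pca_not_is_argmin_sup_example
    unfolding robust by blast
qed

end
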